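(* Let $I\subsetneq\mathbb{N}$ be infinite, $I=I^+\sqcup I^-$ a partition, and $J=\mathbb{N}\setminus I$. For each $j\in J$ let $d_j\in E$ be a linear combination of monomials of odd length, each of which is a product of generators $e_i$ with $i\in I$ and contains an even number of factors $e_i$ with $i\in I^-$. Let $\varphi\in\mathrm{Aut}(E)$, $\varphi^2=\mathrm{id}$, be the automorphism given on generators by $\varphi(e_i)=e_i$ for $i\in I^+$, $\varphi(e_i)=-e_i$ for $i\in I^-$, and $\varphi(e_i)=-e_i+2d_i$ for $i\in J$. Then $E_\varphi$ is $\mathbb{Z}_2$-isomorphic to one of the superalgebras $E_\infty$, $E_{k^\ast}$ or $E_k$ for some $k$.
   Context: $F$ is a field of characteristic zero, $L$ an infinite-dimensional $F$-vector space with basis $e_1,e_2,\ldots$, $E$ its Grassmann algebra (basis $1$ and monomials $e_{i_1}\cdots e_{i_m}$, $i_1<\cdots<i_m$, with $e_ie_j=-e_je_i$). $E_\varphi$ is the $\mathbb{Z}_2$-grading on $E$ by eigenspaces of $\varphi$ for eigenvalues $1$ (degree 0) and $-1$ (degree 1). Homogeneous gradings: $E_k$ has $e_1,\ldots,e_k$ of degree $0$ and the other $e_i$ of degree $1$; $E_{k^\ast}$ has $e_1,\ldots,e_k$ of degree $1$ and the others of degree $0$; $E_\infty$ has $e_i$ of degree $0$ for $i$ even and $1$ for $i$ odd. Two superalgebras are $\mathbb{Z}_2$-isomorphic if there is an algebra isomorphism mapping the degree-$i$ component onto the degree-$i$ component, $i=0,1$. *)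

theory Defs
  imports Main
begin

text \<open>An element is a function from finite sets of indices (monomials
  e_{i_1}...e_{i_m}, i_1 < ... < i_m) to coefficients with finite support.\<close>

type_synonym 'a grass = "nat set \<Rightarrow> 'a"

definition gE :: "'a::field grass set" where
  "gE = {x. finite {S. x S \<noteq> 0} \<and> (\<forall>S. x S \<noteq> 0 \<longrightarrow> finite S)}"

definition gsign :: "nat set \<Rightarrow> nat set \<Rightarrow> 'a::field" where
  "gsign S T = (-1) ^ card {(s,t). s \<in> S \<and> t \<in> T \<and> t < s}"

definition gmult :: "'a::field grass \<Rightarrow> 'a grass \<Rightarrow> 'a grass" where
  "gmult x y = (\<lambda>U. \<Sum>S\<in>Pow U. gsign S (U - S) * x S * y (U - S))"

definition gadd :: "'a::field grass \<Rightarrow> 'a grass \<Rightarrow> 'a grass" where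
  "gadd x y = (\<lambda>S. x S + y S)"

definition gscale :: "'a::field \<Rightarrow> 'a grass \<Rightarrow> 'a grass" where
  "gscale c x = (\<lambda>S. c * x S)"

definition ggen :: "nat \<Rightarrow> 'a::field grass" where
  "ggen i = (\<lambda>S. if S = {i} then 1 else 0)"

definition galg_hom :: "('a::field grass \<Rightarrow> 'a grass) \<Rightarrow> bool" where
  "galg_hom f \<longleftrightarrow> (\<forall>x\<in>gE. f x \<in> gE)
     \<and> (\<forall>x\<in>gE. \<forall>y\<in>gE. f (gadd x y) = gadd (f x) (f y))
     \<and> (\<forall>c. \<forall>x\<in>gE. f (gscale c x) = gscale c (f x))
     \<and> (\<forall>x\<in>gE. \<forall>y\<in>gE. f (gmult x y) = gmult (f x) (f y))"

text \<open>Homogeneous grading where the generators e_i with i \<in> D have degree 1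
  and the others degree 0: components of degree 0 and 1.\<close>
definition hcomp0 :: "nat set \<Rightarrow> 'a::field grass set" where
  "hcomp0 D = {x \<in> gE. \<forall>S. x S \<noteq> 0 \<longrightarrow> even (card (S \<inter> D))}"

definition hcomp1 :: "nat set \<Rightarrow> 'a::field grass set" where
  "hcomp1 D = {x \<in> gE. \<forall>S. x S \<noteq> 0 \<longrightarrow> odd (card (S \<inter> D))}"

definition z2_iso :: "'a::field grass set \<Rightarrow> 'a grass set \<Rightarrow> 'a grass set \<Rightarrow> 'a grass set \<Rightarrow> bool" where
  "z2_iso A0 A1 B0 B1 \<longleftrightarrow> (\<exists>\<psi>. galg_hom \<psi> \<and> bij_betw \<psi> gE gE \<and> \<psi> ` A0 = B0 \<and> \<psi> ` A1 = B1)"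

definition Ephi0 :: "('a::field grass \<Rightarrow> 'a grass) \<Rightarrow> 'a grass set" where
  "Ephi0 \<phi> = {x \<in> gE. \<phi> x = x}"

definition Ephi1 :: "('a::field grass \<Rightarrow> 'a grass) \<Rightarrow> 'a grass set" where
  "Ephi1 \<phi> = {x \<in> gE. \<phi> x = gscale (-1) x}"

text \<open>Homogeneous gradings (indices 0-based): E_k has e_i, i < k, of degree 0;
  E_{k*} has e_i, i < k, of degree 1; E_inf has e_i of degree 1 iff i odd.\<close>
definition Ek_deg1 :: "nat \<Rightarrow> nat set" where "Ek_deg1 k = {i. k \<le> i}"
definition Ekstar_deg1 :: "nat \<Rightarrow> nat set" where "Ekstar_deg1 k = {i. i < k}"
definition Einf_deg1 :: "nat set" where "Einf_deg1 = {i. odd i}"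

end

theory Submission
  imports Defs "HOL-Library.Countable_Set"
begin

text \<open>For j outside I put f_j = e_j - d_j, and f_i = e_i for i in I. Each d_j is a
  combination of monomials in the e_i, i in I, with an even number of factors from I^-, so
  phi fixes d_j and phi(f_j) = -e_j + 2 d_j - d_j = -f_j. Thus phi multiplies each of the
  odd free generators f_i by a sign, and the substitution e_i \<mapsto> f_i identifies E_phi
  with the homogeneous grading whose odd generators are indexed by D = I^- \<union> J.
  A permutation of the indices carries D to {i. i < k}, {i. k \<le> i} or the odd numbers,
  according as D is finite, its complement is finite, or neither.\<close>

section \<open>Signs of shuffles\<close>

definition inversions :: "nat set \<Rightarrow> nat set \<Rightarrow> (nat \<times> nat) set" where
  "inversions S T = {(s, t). s \<in> S \<and> t \<in> T \<and> t < s}"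

lemma gsign_eq_card_inversions: "gsign S T = (-1) ^ card (inversions S T)"
  by (simp add: gsign_def inversions_def)

lemma finite_inversions: "finite S \<Longrightarrow> finite T \<Longrightarrow> finite (inversions S T)"
  by (rule finite_subset[of _ "S \<times> T"]) (auto simp: inversions_def)

lemma gsign_Un_left:
  assumes "finite A" "finite B" "finite C" "A \<inter> B = {}"
  shows "gsign (A \<union> B) C = (gsign A C * gsign B C :: 'a::field)"
proof -
  have "inversions (A \<union> B) C = inversions A C \<union> inversions B C"
    and "inversions A C \<inter> inversions B C = {}"
    using assms(4) by (auto simp: inversions_def)
  then show ?thesis
    using assms by (simp add: gsign_eq_card_inversions card_Un_disjoint finite_inversions power_add)
qed

lemma gsign_Un_right:
  assumes "finite A" "finite B" "finite C" "B \<inter> C = {}"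
  shows "gsign A (B \<union> C) = (gsign A B * gsign A C :: 'a::field)"
proof -
  have "inversions A (B \<union> C) = inversions A B \<union> inversions A C"
    and "inversions A B \<inter> inversions A C = {}"
    using assms(4) by (auto simp: inversions_def)
  then show ?thesis
    using assms by (simp add: gsign_eq_card_inversions card_Un_disjoint finite_inversions power_add)
qed

lemma gsign_mult_gsign_swap:
  assumes fin: "finite A" "finite B" and disj: "A \<inter> B = {}"
  shows "gsign A B * gsign B A = ((-1) ^ (card A * card B) :: 'a::field)"
proof -
  let ?swap = "\<lambda>(a, b). (b, a)"
  have "A \<times> B = inversions A B \<union> ?swap ` inversions B A"
  proof (intro equalityI subsetI)
    fix p assume "p \<in> A \<times> B"
    then obtain a b where ab: "p = (a, b)" "a \<in> A" "b \<in> B" by blast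
    with disj have "b < a \<or> a < b" by (metis disjoint_iff nat_neq_iff)
    then show "p \<in> inversions A B \<union> ?swap ` inversions B A"
      using ab by (auto simp: inversions_def image_iff)
  qed (auto simp: inversions_def)
  moreover have "inversions A B \<inter> ?swap ` inversions B A = {}"
    by (auto simp: inversions_def)
  moreover have "card (?swap ` inversions B A) = card (inversions B A)"
    by (rule card_image) (auto simp: inj_on_def)
  ultimately have "card A * card B = card (inversions A B) + card (inversions B A)"
    using fin by (metis card_Un_disjoint card_cartesian_product finite_inversions finite_imageI)
  then show ?thesis by (simp add: gsign_eq_card_inversions power_add)
qed

lemma gsign_mult_self: "gsign A B * gsign A B = (1::'a::field)"
  unfolding gsign_def by (simp flip: power_mult_distrib)

lemma gsign_empty_left [simp]: "gsign {} B = 1"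
  and gsign_empty_right [simp]: "gsign A {} = 1"
  by (simp_all add: gsign_def)

lemma gsign_singleton_less:
  assumes "\<forall>a\<in>W. s < a"
  shows "gsign {s} W = 1"
proof -
  have "inversions {s} W = {}" using assms by (auto simp: inversions_def)
  then show ?thesis by (simp add: gsign_eq_card_inversions)
qed

lemma gsign_singleton_insert:
  assumes "finite W" "w < s" "w \<notin> W"
  shows "gsign {s} (insert w W) = - (gsign {s} W :: 'a::field)"
proof -
  have "inversions {s} (insert w W) = insert (s, w) (inversions {s} W)"
    and "(s, w) \<notin> inversions {s} W"
    using assms by (auto simp: inversions_def)
  then show ?thesis using assms by (simp add: gsign_eq_card_inversions finite_inversions)
qed

section \<open>The Grassmann algebra\<close>

definition gsupp :: "'a::field grass \<Rightarrow> nat set set" where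
  "gsupp x = {S. x S \<noteq> 0}"

definition gmono :: "nat set \<Rightarrow> 'a::field grass" where
  "gmono T = (\<lambda>S. if S = T then 1 else 0)"

definition gone :: "'a::field grass" where
  "gone = gmono {}"

abbreviation gzero :: "'a::field grass" where
  "gzero \<equiv> \<lambda>S. 0"

lemma gE_intro: "finite (gsupp x) \<Longrightarrow> (\<And>S. x S \<noteq> 0 \<Longrightarrow> finite S) \<Longrightarrow> x \<in> gE"
  by (auto simp: gE_def gsupp_def)

lemma finite_gsupp: "x \<in> gE \<Longrightarrow> finite (gsupp x)"
  by (auto simp: gE_def gsupp_def)

lemma gE_finite_index: "x \<in> gE \<Longrightarrow> x S \<noteq> 0 \<Longrightarrow> finite S"
  by (auto simp: gE_def)

lemma gmult_infinite: "infinite U \<Longrightarrow> gmult x y U = 0"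
  by (simp add: gmult_def)

lemma gmult_nonzero_split:
  assumes "gmult x y U \<noteq> 0"
  obtains S where "S \<subseteq> U" "x S \<noteq> 0" "y (U - S) \<noteq> 0"
  using assms sum.neutral unfolding gmult_def by (metis (no_types, lifting) PowD mult_eq_0_iff)

lemma gmult_gE:
  assumes x: "x \<in> gE" and y: "y \<in> gE"
  shows "gmult x y \<in> gE"
proof (rule gE_intro)
  have "gsupp (gmult x y) \<subseteq> (\<lambda>(S, T). S \<union> T) ` (gsupp x \<times> gsupp y)"
  proof
    fix U assume "U \<in> gsupp (gmult x y)"
    then obtain S where "S \<subseteq> U" "x S \<noteq> 0" "y (U - S) \<noteq> 0"
      by (auto simp: gsupp_def elim: gmult_nonzero_split)
    then show "U \<in> (\<lambda>(S, T). S \<union> T) ` (gsupp x \<times> gsupp y)"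
      unfolding gsupp_def by (intro image_eqI[of _ _ "(S, U - S)"]) auto
  qed
  then show "finite (gsupp (gmult x y))"
    using finite_gsupp[OF x] finite_gsupp[OF y] by (meson finite_SigmaI finite_imageI finite_subset)
qed (use gmult_infinite in blast)

lemma gadd_gE:
  assumes x: "x \<in> gE" and y: "y \<in> gE"
  shows "gadd x y \<in> gE"
proof (rule gE_intro)
  have "gsupp (gadd x y) \<subseteq> gsupp x \<union> gsupp y" by (auto simp: gsupp_def gadd_def)
  then show "finite (gsupp (gadd x y))"
    using finite_gsupp[OF x] finite_gsupp[OF y] by (meson finite_Un finite_subset)
  fix S assume "gadd x y S \<noteq> 0"
  then have "x S \<noteq> 0 \<or> y S \<noteq> 0" by (auto simp: gadd_def)
  then show "finite S" using x y gE_finite_index by blast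
qed

lemma gscale_gE: "x \<in> gE \<Longrightarrow> gscale c x \<in> gE"
  unfolding gE_def gscale_def by (auto elim!: rev_finite_subset)

lemma gmono_gE: "finite T \<Longrightarrow> gmono T \<in> gE"
  by (rule gE_intro) (auto simp: gsupp_def gmono_def split: if_splits)

lemma ggen_eq_gmono: "ggen i = gmono {i}"
  by (simp add: ggen_def gmono_def)

lemma gone_gE: "gone \<in> gE"
  by (simp add: gone_def gmono_gE)

lemma ggen_gE: "ggen i \<in> gE"
  by (simp add: ggen_eq_gmono gmono_gE)

lemma gmult_gscale_left: "gmult (gscale c x) y = gscale c (gmult x y)"
  by (simp add: gmult_def gscale_def fun_eq_iff sum_distrib_left algebra_simps)

lemma gmult_gscale_right: "gmult x (gscale c y) = gscale c (gmult x y)"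
  by (simp add: gmult_def gscale_def fun_eq_iff sum_distrib_left algebra_simps)

lemma gmult_gzero_left [simp]: "gmult gzero y = gzero"
  and gmult_gzero_right [simp]: "gmult y gzero = gzero"
  by (simp_all add: gmult_def fun_eq_iff)

lemma gscale_gscale: "gscale a (gscale b x) = gscale (a * b) x"
  by (simp add: gscale_def fun_eq_iff mult.assoc)

lemma gscale_one [simp]: "gscale 1 x = x"
  and gscale_gzero [simp]: "gscale c gzero = gzero"
  by (simp_all add: gscale_def)

lemma gmult_gmono:
  assumes "finite S" "finite T"
  shows "gmult (gmono S) (gmono T) =
    (if S \<inter> T = {} then gscale (gsign S T) (gmono (S \<union> T)) else gzero)"
proof
  fix U
  have "gmult (gmono S) (gmono T) U =
      (\<Sum>A\<in>Pow U. if A = S then (if U - S = T then gsign S T else 0) else 0)"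
    unfolding gmult_def gmono_def by (rule sum.cong) auto
  also have "\<dots> = (if S \<subseteq> U \<and> U - S = T \<and> finite U then gsign S T else 0)"
    by (cases "finite U") (auto simp: sum.delta)
  also have "\<dots> = (if S \<inter> T = {} then gscale (gsign S T) (gmono (S \<union> T)) else gzero) U"
    using assms by (auto simp: gscale_def gmono_def)
  finally show "gmult (gmono S) (gmono T) U = \<dots>" .
qed

lemma gmult_gone_right:
  assumes x: "x \<in> gE"
  shows "gmult x gone = x"
proof
  fix U show "gmult x gone U = x U"
  proof (cases "finite U")
    case True
    have "gmult x gone U = (\<Sum>A\<in>Pow U. if A = U then x U else 0)"
      unfolding gmult_def gone_def gmono_def by (rule sum.cong) auto
    then show ?thesis using True by (simp add: sum.delta)
  qed (use x gE_finite_index gmult_infinite in metis)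
qed

lemma gmult_gone_left:
  assumes x: "x \<in> gE"
  shows "gmult gone x = x"
proof
  fix U show "gmult gone x U = x U"
  proof (cases "finite U")
    case True
    have "gmult gone x U = (\<Sum>A\<in>Pow U. if A = {} then x U else 0)"
      unfolding gmult_def gone_def gmono_def by (rule sum.cong) auto
    then show ?thesis using True by (simp add: sum.delta)
  qed (use x gE_finite_index gmult_infinite in metis)
qed

lemma gmult_assoc: "gmult (gmult x y) z = gmult x (gmult y z)"
proof
  fix U
  show "gmult (gmult x y) z U = gmult x (gmult y z) U"
  proof (cases "finite U")
    case False then show ?thesis by (simp add: gmult_infinite)
  next
    case fU: True
    define f where "f = (\<lambda>A B. gsign A (U - A) * gsign B (A - B) * x B * y (A - B) * z (U - A))"
    define g where "g = (\<lambda>B C. gsign B (U - B) * gsign C (U - B - C) * x B * y C * z (U - B - C))"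
    have "gmult (gmult x y) z U = (\<Sum>A\<in>Pow U. \<Sum>B\<in>Pow A. f A B)"
      unfolding gmult_def f_def sum_distrib_left sum_distrib_right
      by (intro sum.cong refl) (simp add: mult_ac)
    also have "\<dots> = (\<Sum>(A, B)\<in>Sigma (Pow U) Pow. f A B)"
      using fU by (intro sum.Sigma) (auto intro: finite_subset)
    finally have L: "gmult (gmult x y) z U = (\<Sum>(A, B)\<in>Sigma (Pow U) Pow. f A B)" .
    have "gmult x (gmult y z) U = (\<Sum>B\<in>Pow U. \<Sum>C\<in>Pow (U - B). g B C)"
      unfolding gmult_def g_def sum_distrib_left sum_distrib_right
      by (intro sum.cong refl) (simp add: mult_ac Diff_Int2 Int_absorb1)
    also have "\<dots> = (\<Sum>(B, C)\<in>Sigma (Pow U) (\<lambda>B. Pow (U - B)). g B C)"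
      using fU by (intro sum.Sigma) auto
    finally have R: "gmult x (gmult y z) U = (\<Sum>(B, C)\<in>Sigma (Pow U) (\<lambda>B. Pow (U - B)). g B C)" .
    define h where "h = (\<lambda>(B::nat set, C::nat set). (B \<union> C, B))"
    have bij: "bij_betw h (Sigma (Pow U) (\<lambda>B. Pow (U - B))) (Sigma (Pow U) Pow)"
      by (rule bij_betw_byWitness[where f' = "\<lambda>(A, B). (B, A - B)"]) (auto simp: h_def)
    have "(\<Sum>(A, B)\<in>Sigma (Pow U) Pow. f A B) =
        (\<Sum>p\<in>Sigma (Pow U) (\<lambda>B. Pow (U - B)). (\<lambda>(A, B). f A B) (h p))"
      using sum.reindex_bij_betw[OF bij, of "\<lambda>(A, B). f A B"] by (simp only:)
    also have "\<dots> = (\<Sum>(B, C)\<in>Sigma (Pow U) (\<lambda>B. Pow (U - B)). g B C)"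
    proof (rule sum.cong[OF refl])
      fix p assume "p \<in> Sigma (Pow U) (\<lambda>B. Pow (U - B))"
      then obtain B C where p: "p = (B, C)" "B \<subseteq> U" "C \<subseteq> U - B" by auto
      define R where "R = U - B - C"
      have fin: "finite B" "finite C" "finite R" using p fU R_def by (auto intro: finite_subset)
      have e: "B \<union> C - B = C" "U - (B \<union> C) = R" "U - B = C \<union> R"
        using p R_def by auto
      have "gsign (B \<union> C) R = gsign B R * (gsign C R :: 'a)"
        using fin p R_def by (intro gsign_Un_left) auto
      moreover have "gsign B (C \<union> R) = gsign B C * (gsign B R :: 'a)"
        using fin p R_def by (intro gsign_Un_right) auto
      ultimately show "(\<lambda>(A, B). f A B) (h p) = (\<lambda>(B, C). g B C) p"
        unfolding p h_def f_def g_def case_prod_conv R_def[symmetric] unfolding e by (simp only: mult_ac)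
    qed
    finally show ?thesis using L R by simp
  qed
qed

definition godd :: "'a::field grass \<Rightarrow> bool" where
  "godd a \<longleftrightarrow> (\<forall>S. a S \<noteq> 0 \<longrightarrow> odd (card S))"

lemma godd_ggen: "godd (ggen i)"
  by (simp add: godd_def ggen_def)

lemma godd_gscale: "godd a \<Longrightarrow> godd (gscale c a)"
  by (simp add: godd_def gscale_def)

lemma godd_gadd: "godd a \<Longrightarrow> godd b \<Longrightarrow> godd (gadd a b)"
  unfolding godd_def gadd_def by (metis add.left_neutral add.right_neutral)

lemma gmult_godd_anticomm:
  assumes a: "godd a" and b: "godd b"
  shows "gmult a b = gscale (-1) (gmult b a)"
proof
  fix U
  show "gmult a b U = gscale (-1) (gmult b a) U"
  proof (cases "finite U")
    case False then show ?thesis by (simp add: gmult_infinite gscale_def)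
  next
    case fU: True
    have bij: "bij_betw (\<lambda>S. U - S) (Pow U) (Pow U)"
      by (rule bij_betw_byWitness[where f' = "\<lambda>S. U - S"]) auto
    have "gmult b a U = (\<Sum>S\<in>Pow U. gsign (U - S) (U - (U - S)) * b (U - S) * a (U - (U - S)))"
      unfolding gmult_def by (rule sum.reindex_bij_betw[OF bij, symmetric])
    also have "\<dots> = (\<Sum>S\<in>Pow U. gsign (U - S) S * b (U - S) * a S)"
      by (intro sum.cong refl) (auto simp: double_diff)
    finally have ba: "gmult b a U = (\<Sum>S\<in>Pow U. gsign (U - S) S * b (U - S) * a S)" .
    have "gsign S (U - S) * a S * b (U - S) = - (gsign (U - S) S * b (U - S) * a S)"
      if S: "S \<subseteq> U" for S
    proof (cases "a S = 0 \<or> b (U - S) = 0")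
      case False
      then have "odd (card S)" "odd (card (U - S))" using a b by (auto simp: godd_def)
      moreover have "finite S" "finite (U - S)" using S fU by (auto intro: finite_subset)
      ultimately have "gsign S (U - S) * gsign (U - S) S = (-1::'a)"
        using gsign_mult_gsign_swap[of S "U - S"] by simp
      then have "gsign S (U - S) = - (gsign (U - S) S :: 'a)"
        by (metis gsign_mult_self minus_mult_left mult.assoc mult_1_left mult_1_right)
      then show ?thesis by (simp add: mult_ac)
    qed auto
    then have "gmult a b U = (\<Sum>S\<in>Pow U. - (gsign (U - S) S * b (U - S) * a S))"
      unfolding gmult_def by (intro sum.cong) auto
    then show ?thesis by (simp add: ba gscale_def sum_negf)
  qed
qed

lemma gmult_godd_self:
  assumes "godd (a :: 'a::field_char_0 grass)"
  shows "gmult a a = gzero"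
proof
  fix U
  have "gmult a a U = - gmult a a U"
    using fun_cong[OF gmult_godd_anticomm[OF assms assms], of U] by (simp add: gscale_def)
  then show "gmult a a U = 0" by simp
qed

section \<open>Ordered products of odd elements\<close>

primrec gprod :: "'a::field grass list \<Rightarrow> 'a grass" where
  "gprod [] = gone"
| "gprod (a # l) = gmult a (gprod l)"

text \<open>For infinite S the list sorted_list_of_set S is empty, so gprod_set g S = gone.\<close>

definition gprod_set :: "(nat \<Rightarrow> 'a::field grass) \<Rightarrow> nat set \<Rightarrow> 'a grass" where
  "gprod_set g S = gprod (map g (sorted_list_of_set S))"

lemma gprod_set_empty [simp]: "gprod_set g {} = gone"
  by (simp add: gprod_set_def)

lemma gprod_set_insert_min:
  assumes "finite W" "\<forall>a\<in>W. w < a"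
  shows "gprod_set g (insert w W) = gmult (g w) (gprod_set g W)"
proof -
  have "Min (insert w W) = w" by (rule Min_eqI) (use assms in \<open>auto intro: less_imp_le\<close>)
  moreover have "insert w W - {w} = W" using assms by auto
  ultimately show ?thesis
    unfolding gprod_set_def using sorted_list_of_set_nonempty[of "insert w W"] assms by simp
qed

lemma gprod_gE: "\<forall>a\<in>set l. a \<in> gE \<Longrightarrow> gprod l \<in> gE"
  by (induct l) (auto simp: gone_gE gmult_gE)

lemma gprod_set_gE: "(\<And>i. g i \<in> gE) \<Longrightarrow> gprod_set g S \<in> gE"
  unfolding gprod_set_def by (rule gprod_gE) auto

lemma gprod_set_cong: "(\<And>i. i \<in> S \<Longrightarrow> g i = g' i) \<Longrightarrow> gprod_set g S = gprod_set g' S"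
  unfolding gprod_set_def by (cases "finite S") (auto intro!: arg_cong[where f = gprod] map_cong)

lemma gprod_set_ggen: "finite S \<Longrightarrow> gprod_set ggen S = (gmono S :: 'a::field grass)"
proof (induction S rule: finite_linorder_min_induct)
  case empty then show ?case by (simp add: gone_def)
next
  case (insert w W)
  then have "gmult (ggen w) (gmono W) = gscale (gsign {w} W) (gmono (insert w W) :: 'a grass)"
    using gmult_gmono[of "{w}" W] by (auto simp: ggen_eq_gmono)
  also have "\<dots> = gmono (insert w W)"
    using insert by (simp add: gsign_singleton_less)
  finally show ?case using insert by (simp add: gprod_set_insert_min)
qed

lemma gmult_gprod_set_single:
  fixes g :: "nat \<Rightarrow> 'a::field_char_0 grass"
  assumes g: "\<And>i. g i \<in> gE" "\<And>i. godd (g i)" and "finite W"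
  shows "gmult (g s) (gprod_set g W) =
    (if s \<in> W then gzero else gscale (gsign {s} W) (gprod_set g (insert s W)))"
  using \<open>finite W\<close>
proof (induction W rule: finite_linorder_min_induct)
  case empty
  then show ?case using gprod_set_insert_min[of "{}" s g] by (simp add: gmult_gone_right g)
next
  case (insert w W)
  have GW: "gprod_set g (insert w W) = gmult (g w) (gprod_set g W)"
    using gprod_set_insert_min insert by blast
  consider "s < w" | "s = w" | "w < s" by linarith
  then show ?case
  proof cases
    case 1
    then have "gprod_set g (insert s (insert w W)) = gmult (g s) (gprod_set g (insert w W))"
      and "gsign {s} (insert w W) = (1::'a)"
      using insert by (auto intro!: gprod_set_insert_min gsign_singleton_less)
    then show ?thesis using 1 insert by auto
  next
    case 2
    then show ?thesis by (simp add: GW gmult_godd_self g flip: gmult_assoc)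
  next
    case 3
    have "gmult (g s) (gprod_set g (insert w W)) =
        gscale (-1) (gmult (g w) (gmult (g s) (gprod_set g W)))"
      unfolding GW gmult_assoc[symmetric] gmult_godd_anticomm[OF g(2)[of s] g(2)[of w]]
      by (simp only: gmult_gscale_left gmult_assoc)
    also have "\<dots> = (if s \<in> W then gzero
        else gscale (- gsign {s} W) (gmult (g w) (gprod_set g (insert s W))))"
      using insert.IH by (simp add: gmult_gscale_right gscale_gscale)
    also have "\<dots> = (if s \<in> insert w W then gzero
        else gscale (gsign {s} (insert w W)) (gprod_set g (insert s (insert w W))))"
      using 3 insert
      by (auto simp: gsign_singleton_insert insert_commute[of s w] gprod_set_insert_min)
    finally show ?thesis .
  qed
qed

lemma gmult_gprod_set:
  fixes g :: "nat \<Rightarrow> 'a::field_char_0 grass"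
  assumes g: "\<And>i. g i \<in> gE" "\<And>i. godd (g i)" and "finite S" "finite T"
  shows "gmult (gprod_set g S) (gprod_set g T) =
    (if S \<inter> T = {} then gscale (gsign S T) (gprod_set g (S \<union> T)) else gzero)"
  using \<open>finite S\<close>
proof (induction S rule: finite_linorder_min_induct)
  case empty
  then show ?case by (simp add: gmult_gone_left gprod_set_gE g)
next
  case (insert s S)
  have "gmult (gprod_set g (insert s S)) (gprod_set g T) =
      gmult (g s) (gmult (gprod_set g S) (gprod_set g T))"
    using insert by (simp add: gprod_set_insert_min gmult_assoc)
  also have "\<dots> = (if S \<inter> T = {} then gscale (gsign S T) (gmult (g s) (gprod_set g (S \<union> T)))
      else gzero)"
    using insert.IH by (simp add: gmult_gscale_right)
  also have "\<dots> = (if insert s S \<inter> T = {}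
      then gscale (gsign (insert s S) T) (gprod_set g (insert s S \<union> T)) else gzero)"
  proof -
    have "gsign {s} S = (1::'a)" using insert by (intro gsign_singleton_less) auto
    moreover have "gsign {s} (S \<union> T) = gsign {s} S * (gsign {s} T :: 'a)"
      if "S \<inter> T = {}" using that insert \<open>finite T\<close> by (intro gsign_Un_right) auto
    moreover have "gsign (insert s S) T = gsign {s} T * (gsign S T :: 'a)"
      using gsign_Un_left[of "{s}" S T] insert \<open>finite T\<close> by auto
    ultimately show ?thesis
      using insert \<open>finite T\<close> gmult_gprod_set_single[where g = g and W = "S \<union> T" and s = s, OF g]
      by (auto simp: gscale_gscale mult.commute)
  qed
  finally show ?case .
qed

section \<open>Substitution of odd elements for the generators\<close>

definition glc :: "'b set \<Rightarrow> ('b \<Rightarrow> 'a) \<Rightarrow> ('b \<Rightarrow> 'a::field grass) \<Rightarrow> 'a grass" where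
  "glc A c h = (\<lambda>U. \<Sum>a\<in>A. c a * h a U)"

definition gsubst :: "(nat \<Rightarrow> 'a::field grass) \<Rightarrow> 'a grass \<Rightarrow> 'a grass" where
  "gsubst g x = glc (gsupp x) x (gprod_set g)"

definition glinear :: "('a::field grass \<Rightarrow> 'a grass) \<Rightarrow> bool" where
  "glinear f \<longleftrightarrow> (\<forall>x\<in>gE. \<forall>y\<in>gE. f (gadd x y) = gadd (f x) (f y))
     \<and> (\<forall>c. \<forall>x\<in>gE. f (gscale c x) = gscale c (f x))"

lemma glc_gmono:
  assumes "x \<in> gE"
  shows "glc (gsupp x) x gmono = x"
proof
  fix U
  have "glc (gsupp x) x gmono U = (\<Sum>S\<in>gsupp x. if U = S then x S else 0)"
    unfolding glc_def gmono_def by (rule sum.cong) auto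
  then show "glc (gsupp x) x gmono U = x U"
    using finite_gsupp[OF assms] by (simp add: gsupp_def)
qed

lemma glc_gsupp_superset: "finite B \<Longrightarrow> gsupp x \<subseteq> B \<Longrightarrow> glc (gsupp x) x h = glc B x h"
  unfolding glc_def by (rule ext, rule sum.mono_neutral_left) (auto simp: gsupp_def)

lemma glc_gE:
  assumes A: "finite A" and h: "\<And>a. a \<in> A \<Longrightarrow> h a \<in> gE"
  shows "glc A c h \<in> gE"
proof (rule gE_intro)
  have nz: "\<exists>a\<in>A. h a U \<noteq> 0" if "glc A c h U \<noteq> 0" for U
    using that unfolding glc_def by (metis (no_types, lifting) mult_eq_0_iff sum.neutral)
  then have "gsupp (glc A c h) \<subseteq> (\<Union>a\<in>A. gsupp (h a))" by (auto simp: gsupp_def)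
  moreover have "finite (\<Union>a\<in>A. gsupp (h a))" using A h finite_gsupp by blast
  ultimately show "finite (gsupp (glc A c h))" by (rule finite_subset)
  fix U assume "glc A c h U \<noteq> 0"
  then show "finite U" using nz h gE_finite_index by blast
qed

lemma gmult_glc:
  assumes "finite A" "finite B"
  shows "gmult (glc A c h) (glc B d k) =
    glc (A \<times> B) (\<lambda>p. c (fst p) * d (snd p)) (\<lambda>p. gmult (h (fst p)) (k (snd p)))"
proof
  fix U
  let ?t = "\<lambda>S a b. c a * d b * (gsign S (U - S) * h a S * k b (U - S))"
  have "gmult (glc A c h) (glc B d k) U = (\<Sum>S\<in>Pow U. \<Sum>a\<in>A. \<Sum>b\<in>B. ?t S a b)"
    unfolding gmult_def glc_def
  proof (intro sum.cong refl)
    fix S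
    have "gsign S (U - S) * (\<Sum>a\<in>A. c a * h a S) * (\<Sum>b\<in>B. d b * k b (U - S))
        = gsign S (U - S) * (\<Sum>a\<in>A. \<Sum>b\<in>B. (c a * h a S) * (d b * k b (U - S)))"
      by (simp only: mult.assoc sum_product)
    also have "\<dots> = (\<Sum>a\<in>A. \<Sum>b\<in>B. gsign S (U - S) * ((c a * h a S) * (d b * k b (U - S))))"
      by (simp only: sum_distrib_left)
    finally show "gsign S (U - S) * (\<Sum>a\<in>A. c a * h a S) * (\<Sum>b\<in>B. d b * k b (U - S))
        = (\<Sum>a\<in>A. \<Sum>b\<in>B. ?t S a b)"
      by (simp only: mult_ac)
  qed
  also have "\<dots> = (\<Sum>a\<in>A. \<Sum>b\<in>B. \<Sum>S\<in>Pow U. ?t S a b)"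
    by (subst sum.swap) (intro sum.cong refl sum.swap)
  also have "\<dots> = glc (A \<times> B) (\<lambda>p. c (fst p) * d (snd p)) (\<lambda>p. gmult (h (fst p)) (k (snd p))) U"
    unfolding glc_def gmult_def sum.cartesian_product' by (simp only: sum_distrib_left split_beta fst_conv snd_conv)
  finally show "gmult (glc A c h) (glc B d k) U = \<dots>" .
qed

lemma glinear_gzero:
  assumes "glinear f"
  shows "f gzero = gzero"
proof -
  have "f (gscale 0 gone) = gscale 0 (f gone)"
    using assms gone_gE unfolding glinear_def by blast
  then show ?thesis by (simp add: gscale_def)
qed

lemma glinear_glc:
  assumes f: "glinear f" and "finite A" and "\<And>a. a \<in> A \<Longrightarrow> h a \<in> gE"
  shows "f (glc A c h) = glc A c (\<lambda>a. f (h a))"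
  using \<open>finite A\<close> assms(3)
proof (induction A rule: finite_induct)
  case empty
  then show ?case by (simp add: glc_def glinear_gzero[OF f])
next
  case (insert a A)
  have "glc (insert a A) c h = gadd (gscale (c a) (h a)) (glc A c h)" for h :: "_ \<Rightarrow> 'a grass"
    using insert by (simp add: glc_def gadd_def gscale_def fun_eq_iff)
  moreover have "gscale (c a) (h a) \<in> gE" "glc A c h \<in> gE"
    using insert by (auto intro: gscale_gE glc_gE)
  ultimately show ?case using f insert unfolding glinear_def by simp
qed

lemma galg_hom_glinear: "galg_hom f \<Longrightarrow> glinear f"
  by (simp add: galg_hom_def glinear_def)

lemma galg_hom_gE: "galg_hom f \<Longrightarrow> x \<in> gE \<Longrightarrow> f x \<in> gE"
  and galg_hom_gadd: "galg_hom f \<Longrightarrow> x \<in> gE \<Longrightarrow> y \<in> gE \<Longrightarrow> f (gadd x y) = gadd (f x) (f y)"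
  and galg_hom_gscale: "galg_hom f \<Longrightarrow> x \<in> gE \<Longrightarrow> f (gscale c x) = gscale c (f x)"
  and galg_hom_gmult: "galg_hom f \<Longrightarrow> x \<in> gE \<Longrightarrow> y \<in> gE \<Longrightarrow> f (gmult x y) = gmult (f x) (f y)"
  by (simp_all add: galg_hom_def)

lemma glinear_gsubst: "glinear (gsubst g)"
  unfolding glinear_def
proof (intro conjI ballI allI)
  fix x y :: "'a grass" and c :: 'a assume x: "x \<in> gE" and y: "y \<in> gE"
  let ?B = "gsupp x \<union> gsupp y"
  have "finite ?B" using x y finite_gsupp by auto
  then have "gsubst g z = glc ?B z (gprod_set g)" if "gsupp z \<subseteq> ?B" for z
    unfolding gsubst_def using that by (rule glc_gsupp_superset)
  moreover have "gsupp (gadd x y) \<subseteq> ?B" by (auto simp: gsupp_def gadd_def)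
  ultimately show "gsubst g (gadd x y) = gadd (gsubst g x) (gsubst g y)"
    by (simp add: glc_def gadd_def fun_eq_iff distrib_right sum.distrib)
  have "gsupp (gscale c x) \<subseteq> gsupp x" by (auto simp: gsupp_def gscale_def)
  then have "gsubst g (gscale c x) = glc (gsupp x) (gscale c x) (gprod_set g)"
    unfolding gsubst_def by (rule glc_gsupp_superset[OF finite_gsupp[OF x]])
  then show "gsubst g (gscale c x) = gscale c (gsubst g x)"
    by (simp add: gsubst_def glc_def gscale_def fun_eq_iff sum_distrib_left mult.assoc)
qed

lemma gsubst_gmono: "gsubst g (gmono S) = gprod_set g S"
proof -
  have "gsupp (gmono S :: 'a grass) = {S}" by (auto simp: gsupp_def gmono_def)
  then show ?thesis by (simp add: gsubst_def glc_def gmono_def)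
qed

lemma gsubst_gone: "gsubst g gone = gone"
  by (simp add: gone_def gsubst_gmono)

lemma gsubst_ggen: "g i \<in> gE \<Longrightarrow> gsubst g (ggen i) = g i"
  using gprod_set_insert_min[of "{}" i g]
  by (simp add: ggen_eq_gmono gsubst_gmono gmult_gone_right)

lemma gsubst_gE: "(\<And>i. g i \<in> gE) \<Longrightarrow> x \<in> gE \<Longrightarrow> gsubst g x \<in> gE"
  unfolding gsubst_def by (rule glc_gE) (auto simp: finite_gsupp gprod_set_gE)

lemma gsubst_gmult_gmono:
  fixes g :: "nat \<Rightarrow> 'a::field_char_0 grass"
  assumes g: "\<And>i. g i \<in> gE" "\<And>i. godd (g i)" and "finite S" "finite T"
  shows "gsubst g (gmult (gmono S) (gmono T)) = gmult (gprod_set g S) (gprod_set g T)"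
proof -
  have "gsubst g gzero = gzero" by (rule glinear_gzero[OF glinear_gsubst])
  moreover have "gsubst g (gscale c (gmono (S \<union> T))) = gscale c (gsubst g (gmono (S \<union> T)))"
    for c using glinear_gsubst[of g] gmono_gE[of "S \<union> T"] assms unfolding glinear_def by blast
  ultimately show ?thesis
    using assms by (simp add: gmult_gmono gmult_gprod_set gsubst_gmono)
qed

lemma gsubst_gmult:
  fixes g :: "nat \<Rightarrow> 'a::field_char_0 grass"
  assumes g: "\<And>i. g i \<in> gE" "\<And>i. godd (g i)" and x: "x \<in> gE" and y: "y \<in> gE"
  shows "gsubst g (gmult x y) = gmult (gsubst g x) (gsubst g y)"
proof -
  let ?P = "gsupp x \<times> gsupp y" and ?c = "\<lambda>p. x (fst p) * y (snd p)"
  have P: "finite ?P" using finite_gsupp x y by blast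
  have fin: "finite (fst p)" "finite (snd p)" if "p \<in> ?P" for p
    using that x y gE_finite_index by (auto simp: gsupp_def)
  have xy: "gmult x y = glc ?P ?c (\<lambda>p. gmult (gmono (fst p)) (gmono (snd p)))"
    using gmult_glc[OF finite_gsupp[OF x] finite_gsupp[OF y], of x gmono y gmono]
    unfolding glc_gmono[OF x] glc_gmono[OF y] .
  have "gmult (gmono (fst p)) (gmono (snd p)) \<in> gE" if "p \<in> ?P" for p
    using fin[OF that] by (simp add: gmult_gE gmono_gE)
  then have "gsubst g (gmult x y) =
      glc ?P ?c (\<lambda>p. gsubst g (gmult (gmono (fst p)) (gmono (snd p))))"
    unfolding xy by (rule glinear_glc[OF glinear_gsubst P])
  also have "\<dots> = glc ?P ?c (\<lambda>p. gmult (gprod_set g (fst p)) (gprod_set g (snd p)))"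
    unfolding glc_def using gsubst_gmult_gmono[OF g] fin by (intro ext sum.cong) auto
  also have "\<dots> = gmult (gsubst g x) (gsubst g y)"
    by (simp add: gsubst_def gmult_glc finite_gsupp x y)
  finally show ?thesis .
qed

lemma galg_hom_gsubst:
  fixes g :: "nat \<Rightarrow> 'a::field_char_0 grass"
  assumes "\<And>i. g i \<in> gE" "\<And>i. godd (g i)"
  shows "galg_hom (gsubst g)"
  using assms glinear_gsubst[of g]
  by (simp add: galg_hom_def glinear_def gsubst_gE gsubst_gmult)

lemma galg_hom_gprod_set:
  assumes f: "galg_hom f" "f gone = gone" and g: "\<And>i. g i \<in> gE" and "finite S"
  shows "f (gprod_set g S) = gprod_set (\<lambda>i. f (g i)) S"
  using \<open>finite S\<close>
proof (induction S rule: finite_linorder_min_induct)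
  case empty then show ?case by (simp add: f)
next
  case (insert w W)
  have "f (gprod_set g (insert w W)) = f (gmult (g w) (gprod_set g W))"
    using insert by (simp add: gprod_set_insert_min)
  also have "\<dots> = gmult (f (g w)) (f (gprod_set g W))"
    by (rule galg_hom_gmult[OF f(1) g gprod_set_gE[OF g]])
  finally show ?case using insert by (simp add: gprod_set_insert_min)
qed

lemma galg_hom_eq_gsubst:
  assumes f: "galg_hom f" "f gone = gone" and x: "x \<in> gE"
  shows "f x = gsubst (\<lambda>i. f (ggen i)) x"
proof -
  have fin: "finite S" if "S \<in> gsupp x" for S
    using that x gE_finite_index by (auto simp: gsupp_def)
  then have "f (glc (gsupp x) x gmono) = glc (gsupp x) x (\<lambda>S. f (gmono S))"
    by (intro glinear_glc galg_hom_glinear f finite_gsupp x gmono_gE)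
  also have "\<dots> = gsubst (\<lambda>i. f (ggen i)) x"
  proof -
    have "f (gmono S) = gprod_set (\<lambda>i. f (ggen i)) S" if "finite S" for S
      using galg_hom_gprod_set[OF f, where g = ggen, OF ggen_gE that]
      by (simp add: gprod_set_ggen[OF that])
    then show ?thesis unfolding gsubst_def glc_def using fin by (intro ext sum.cong) auto
  qed
  finally show ?thesis by (simp only: glc_gmono[OF x])
qed

lemma galg_hom_id: "galg_hom (\<lambda>x. x)"
  by (simp add: galg_hom_def)

lemma galg_hom_comp: "galg_hom f \<Longrightarrow> galg_hom h \<Longrightarrow> galg_hom (\<lambda>x. f (h x))"
  by (simp add: galg_hom_def)

lemma galg_hom_eqI:
  assumes "galg_hom f" "f gone = gone" "galg_hom h" "h gone = gone"
    and "\<And>i. f (ggen i) = h (ggen i)" and "x \<in> gE"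
  shows "f x = h x"
proof -
  have "f x = gsubst (\<lambda>i. f (ggen i)) x" by (rule galg_hom_eq_gsubst) (use assms in auto)
  also have "\<dots> = gsubst (\<lambda>i. h (ggen i)) x" by (simp add: assms(5))
  also have "\<dots> = h x" by (rule galg_hom_eq_gsubst[symmetric]) (use assms in auto)
  finally show ?thesis .
qed

lemma galg_hom_gone:
  assumes f: "galg_hom f" and "gone \<in> f ` gE"
  shows "f gone = gone"
proof -
  obtain y where y: "y \<in> gE" "f y = gone" using assms(2) by auto
  have "f gone = gmult (f gone) (f y)"
    by (simp add: y gmult_gone_right[OF galg_hom_gE[OF f gone_gE]])
  also have "\<dots> = f (gmult gone y)" by (rule galg_hom_gmult[symmetric, OF f gone_gE y(1)])
  also have "\<dots> = gone" by (simp add: y gmult_gone_left)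
  finally show ?thesis .
qed

lemma galg_hom_bij_betwI:
  assumes f: "galg_hom f" "f gone = gone" and h: "galg_hom h" "h gone = gone"
    and "\<And>i. f (h (ggen i)) = ggen i" "\<And>i. h (f (ggen i)) = ggen i"
  shows "bij_betw f gE gE"
proof (rule bij_betw_byWitness[where f' = h])
  have hom: "galg_hom (\<lambda>x. f (h x))" "galg_hom (\<lambda>x. h (f x))"
    using f h by (simp_all add: galg_hom_comp)
  show "\<forall>x\<in>gE. h (f x) = x"
    using galg_hom_eqI[OF hom(2) _ galg_hom_id] f h assms(6) by simp
  show "\<forall>y\<in>gE. f (h y) = y"
    using galg_hom_eqI[OF hom(1) _ galg_hom_id] f h assms(5) by simp
qed (use f h galg_hom_gE in blast)+

section \<open>Homogeneous gradings\<close>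

definition hgrading_gen :: "nat set \<Rightarrow> nat \<Rightarrow> 'a::field grass" where
  "hgrading_gen D i = gscale (if i \<in> D then -1 else 1) (ggen i)"

definition hgrading_aut :: "nat set \<Rightarrow> 'a::field grass \<Rightarrow> 'a grass" where
  "hgrading_aut D = gsubst (hgrading_gen D)"

lemma hgrading_gen_gE: "hgrading_gen D i \<in> gE"
  by (simp add: hgrading_gen_def gscale_gE ggen_gE)

lemma galg_hom_hgrading_aut: "galg_hom (hgrading_aut D :: 'a::field_char_0 grass \<Rightarrow> _)"
  unfolding hgrading_aut_def
  by (rule galg_hom_gsubst[OF hgrading_gen_gE]) (simp add: hgrading_gen_def godd_gscale godd_ggen)

lemma hgrading_aut_gone: "hgrading_aut D gone = gone"
  by (simp add: hgrading_aut_def gsubst_gone)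

lemma hgrading_aut_ggen: "hgrading_aut D (ggen i) = hgrading_gen D i"
  by (simp add: hgrading_aut_def gsubst_ggen hgrading_gen_gE)

lemma gprod_set_gscale:
  assumes "finite S"
  shows "gprod_set (\<lambda>i. gscale (c i) (g i)) S = gscale (\<Prod>i\<in>S. c i) (gprod_set g S)"
  using assms
proof (induction S rule: finite_linorder_min_induct)
  case (insert w W)
  then have "w \<notin> W" by auto
  with insert show ?case
    by (simp add: gprod_set_insert_min gmult_gscale_left gmult_gscale_right gscale_gscale mult.commute)
qed simp

lemma hgrading_aut_apply:
  assumes x: "x \<in> gE"
  shows "hgrading_aut D x U = (-1) ^ card (U \<inter> D) * (x U :: 'a::field)"
proof -
  have sign: "(\<Prod>i\<in>S. if i \<in> D then -1 else 1) = ((-1) ^ card (S \<inter> D) :: 'a)"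
    if "finite S" for S
    using that by (simp add: prod.If_cases Int_def)
  have mono: "gprod_set (hgrading_gen D) S = gscale ((-1) ^ card (S \<inter> D)) (gmono S :: 'a grass)"
    if "finite S" for S
    unfolding hgrading_gen_def gprod_set_gscale[OF that] gprod_set_ggen[OF that] sign[OF that] ..
  have "hgrading_aut D x U = (\<Sum>S\<in>gsupp x. if U = S then (-1) ^ card (U \<inter> D) * x U else 0)"
    unfolding hgrading_aut_def gsubst_def glc_def
  proof (intro sum.cong refl)
    fix S assume "S \<in> gsupp x"
    then have "finite S" using x by (auto simp: gsupp_def gE_finite_index)
    then show "x S * gprod_set (hgrading_gen D) S U = (if U = S then (-1) ^ card (U \<inter> D) * x U else 0)"
      by (simp add: mono gscale_def gmono_def)
  qed
  then show ?thesis using finite_gsupp[OF x] by (simp add: gsupp_def)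
qed

lemma Ephi0_hgrading_aut: "Ephi0 (hgrading_aut D) = (hcomp0 D :: 'a::field_char_0 grass set)"
proof -
  have "hgrading_aut D x = x \<longleftrightarrow> (\<forall>S. x S \<noteq> 0 \<longrightarrow> even (card (S \<inter> D)))" if "x \<in> gE"
    for x :: "'a grass"
    using that by (auto simp: fun_eq_iff hgrading_aut_apply minus_one_power_iff)
  then show ?thesis by (auto simp: Ephi0_def hcomp0_def)
qed

lemma Ephi1_hgrading_aut: "Ephi1 (hgrading_aut D) = (hcomp1 D :: 'a::field_char_0 grass set)"
proof -
  have "hgrading_aut D x = gscale (-1) x \<longleftrightarrow> (\<forall>S. x S \<noteq> 0 \<longrightarrow> odd (card (S \<inter> D)))"
    if "x \<in> gE" for x :: "'a grass"
    using that by (auto simp: fun_eq_iff hgrading_aut_apply minus_one_power_iff gscale_def)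
  then show ?thesis by (auto simp: Ephi1_def hcomp1_def)
qed

section \<open>Z2-isomorphisms\<close>

lemma z2_iso_trans:
  assumes "z2_iso A0 A1 B0 B1" and "z2_iso B0 B1 C0 C1"
  shows "z2_iso A0 A1 C0 C1"
proof -
  obtain f h where "galg_hom f" "bij_betw f gE gE" "f ` A0 = B0" "f ` A1 = B1"
    and "galg_hom h" "bij_betw h gE gE" "h ` B0 = C0" "h ` B1 = C1"
    using assms unfolding z2_iso_def by blast
  moreover have "bij_betw (\<lambda>x. h (f x)) gE gE"
    using bij_betw_trans[OF \<open>bij_betw f gE gE\<close> \<open>bij_betw h gE gE\<close>] by (simp add: comp_def)
  ultimately show ?thesis
    unfolding z2_iso_def by (intro exI[of _ "\<lambda>x. h (f x)"]) (auto simp: galg_hom_comp image_image)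
qed

lemma image_eigenspace_conj:
  assumes \<Psi>: "galg_hom \<Psi>" "bij_betw \<Psi> gE gE" and \<phi>: "\<And>x. x \<in> gE \<Longrightarrow> \<phi> x \<in> gE"
    and conj: "\<And>x. x \<in> gE \<Longrightarrow> \<Psi> (\<phi> x) = \<phi>' (\<Psi> x)"
  shows "\<Psi> ` {x \<in> gE. \<phi> x = gscale c x} = {y \<in> gE. \<phi>' y = gscale c y}"
proof (intro equalityI subsetI)
  fix y assume "y \<in> \<Psi> ` {x \<in> gE. \<phi> x = gscale c x}"
  then obtain x where "x \<in> gE" "\<phi> x = gscale c x" "y = \<Psi> x" by auto
  then show "y \<in> {y \<in> gE. \<phi>' y = gscale c y}"
    using conj \<Psi>(1) by (auto simp: galg_hom_gE galg_hom_gscale simp flip: conj)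
next
  fix y assume y: "y \<in> {y \<in> gE. \<phi>' y = gscale c y}"
  then obtain x where x: "x \<in> gE" "y = \<Psi> x" using \<Psi>(2) by (auto simp: bij_betw_def)
  have "\<Psi> (\<phi> x) = \<Psi> (gscale c x)"
    using conj[OF x(1)] y x \<Psi>(1) by (simp add: galg_hom_gscale)
  then have "\<phi> x = gscale c x"
    using \<Psi>(2) \<phi> x(1) gscale_gE unfolding bij_betw_def inj_on_def by blast
  then show "y \<in> \<Psi> ` {x \<in> gE. \<phi> x = gscale c x}" using x by auto
qed

lemma z2_iso_Ephi_conj:
  assumes "galg_hom \<Psi>" "bij_betw \<Psi> gE gE" and "\<And>x. x \<in> gE \<Longrightarrow> \<phi> x \<in> gE"
    and "\<And>x. x \<in> gE \<Longrightarrow> \<Psi> (\<phi> x) = \<phi>' (\<Psi> x)"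
  shows "z2_iso (Ephi0 \<phi>) (Ephi1 \<phi>) (Ephi0 \<phi>') (Ephi1 \<phi>')"
proof -
  have "\<Psi> ` {x \<in> gE. \<phi> x = gscale c x} = {y \<in> gE. \<phi>' y = gscale c y}" for c
    by (rule image_eigenspace_conj) (use assms in auto)
  from this[of 1] this[of "-1"] show ?thesis
    unfolding z2_iso_def Ephi0_def Ephi1_def using assms(1,2) by auto
qed

section \<open>Permutations of the generators\<close>

definition gperm :: "(nat \<Rightarrow> nat) \<Rightarrow> 'a::field grass \<Rightarrow> 'a grass" where
  "gperm p = gsubst (\<lambda>i. ggen (p i))"

lemma galg_hom_gperm: "galg_hom (gperm p :: 'a::field_char_0 grass \<Rightarrow> _)"
  unfolding gperm_def by (rule galg_hom_gsubst) (simp_all add: ggen_gE godd_ggen)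

lemma gperm_gone: "gperm p gone = gone"
  by (simp add: gperm_def gsubst_gone)

lemma gperm_ggen: "gperm p (ggen i) = ggen (p i)"
  by (simp add: gperm_def gsubst_ggen ggen_gE)

lemma bij_betw_gperm:
  assumes "bij p"
  shows "bij_betw (gperm p :: 'a::field_char_0 grass \<Rightarrow> _) gE gE"
  by (rule galg_hom_bij_betwI[where h = "gperm (inv p)"])
     (simp_all add: galg_hom_gperm gperm_gone gperm_ggen
       surj_f_inv_f[OF bij_is_surj[OF assms]] inv_f_f[OF bij_is_inj[OF assms]])

lemma gperm_hgrading_gen:
  "inj p \<Longrightarrow> gperm p (hgrading_gen D i) = (hgrading_gen (p ` D) (p i) :: 'a::field_char_0 grass)"
  by (simp add: hgrading_gen_def galg_hom_gscale[OF galg_hom_gperm ggen_gE] gperm_ggen inj_image_mem_iff)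

lemma gperm_hgrading_aut:
  fixes x :: "'a::field_char_0 grass"
  assumes "bij p" and "x \<in> gE"
  shows "gperm p (hgrading_aut D x) = hgrading_aut (p ` D) (gperm p x)"
proof (rule galg_hom_eqI[OF _ _ _ _ _ \<open>x \<in> gE\<close>])
  show "gperm p (hgrading_aut D (ggen i)) = hgrading_aut (p ` D) (gperm p (ggen i :: 'a grass))"
    for i
    using \<open>bij p\<close> by (simp add: hgrading_aut_ggen gperm_ggen gperm_hgrading_gen bij_is_inj)
qed (simp_all add: galg_hom_comp galg_hom_gperm galg_hom_hgrading_aut gperm_gone hgrading_aut_gone)

lemma z2_iso_hcomp_bij_image:
  assumes "bij p"
  shows "z2_iso (hcomp0 D) (hcomp1 D) (hcomp0 (p ` D)) (hcomp1 (p ` D) :: 'a::field_char_0 grass set)"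
  unfolding Ephi0_hgrading_aut[symmetric] Ephi1_hgrading_aut[symmetric]
  by (rule z2_iso_Ephi_conj[OF galg_hom_gperm bij_betw_gperm[OF assms]])
     (simp_all add: galg_hom_gE[OF galg_hom_hgrading_aut] gperm_hgrading_aut[OF assms])

lemma nat_sets_bij_betw:
  fixes A B :: "nat set"
  assumes "finite A \<longleftrightarrow> finite B" and "finite A \<Longrightarrow> card A = card B"
  shows "\<exists>f. bij_betw f A B"
proof (cases "finite A")
  case True
  then show ?thesis using assms by (simp add: bij_betw_iff_card)
next
  case False
  then have "bij_betw (from_nat_into A) UNIV A" "bij_betw (from_nat_into B) UNIV B"
    using assms by (auto intro: bij_betw_from_nat_into)
  then show ?thesis by (meson bij_betw_inv_into bij_betw_trans)
qed

lemma bij_image_exists: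
  fixes A B :: "nat set"
  assumes "finite A \<longleftrightarrow> finite B" and "finite A \<Longrightarrow> card A = card B"
    and "finite (- A) \<longleftrightarrow> finite (- B)" and "finite (- A) \<Longrightarrow> card (- A) = card (- B)"
  shows "\<exists>p. bij p \<and> p ` A = B"
proof -
  obtain f h where f: "bij_betw f A B" and h: "bij_betw h (- A) (- B)"
    using nat_sets_bij_betw assms by metis
  let ?p = "\<lambda>x. if x \<in> A then f x else h x"
  have "bij_betw ?p A B" "bij_betw ?p (- A) (- B)"
    using f h by (auto intro: bij_betw_cong[THEN iffD1, rotated])
  then have "bij_betw ?p (A \<union> - A) (B \<union> - B)" by (intro bij_betw_combine) auto
  then show ?thesis using \<open>bij_betw ?p A B\<close> by (auto simp: bij_betw_def)
qed

lemma bij_image_normal_form: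
  fixes D :: "nat set"
  shows "(\<exists>p. bij p \<and> p ` D = Einf_deg1) \<or> (\<exists>k p. bij p \<and> p ` D = Ekstar_deg1 k)
    \<or> (\<exists>k p. bij p \<and> p ` D = Ek_deg1 k)"
proof -
  have lt: "{i. i < k} = {..<k}" and ge: "- {i. i < k} = {i. k \<le> i}" "- {i. k \<le> i} = {..<k}"
    for k :: nat by auto
  have inf_ge: "infinite {i. k \<le> i}" for k :: nat
    using infinite_Ici[of k] by (simp add: atLeast_def)
  consider "finite D" | "finite (- D)" | "infinite D" "infinite (- D)" by blast
  then show ?thesis
  proof cases
    case 1
    then have "infinite (- D)" using finite_compl infinite_UNIV_nat by blast
    with 1 have "\<exists>p. bij p \<and> p ` D = Ekstar_deg1 (card D)"
      by (intro bij_image_exists) (simp_all add: Ekstar_deg1_def lt ge inf_ge infinite_Ici)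
    then show ?thesis by blast
  next
    case 2
    then have "infinite D" using finite_compl infinite_UNIV_nat by blast
    with 2 have "\<exists>p. bij p \<and> p ` D = Ek_deg1 (card (- D))"
      by (intro bij_image_exists) (simp_all add: Ek_deg1_def ge inf_ge infinite_Ici)
    then show ?thesis by blast
  next
    case 3
    have "\<exists>n>m. n \<in> {i::nat. odd i}" "\<exists>n>m. n \<in> - {i::nat. odd i}" for m
      by (rule exI[of _ "2 * m + 1"], simp) (rule exI[of _ "2 * m + 2"], simp)
    then have "infinite {i::nat. odd i}" "infinite (- {i::nat. odd i})"
      unfolding infinite_nat_iff_unbounded by blast+
    then show ?thesis using 3 bij_image_exists[of D Einf_deg1] by (simp add: Einf_deg1_def)
  qed
qed

section \<open>Change of generators\<close>

definition shift_gen :: "nat set \<Rightarrow> (nat \<Rightarrow> 'a::field grass) \<Rightarrow> 'a \<Rightarrow> nat \<Rightarrow> 'a grass" where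
  "shift_gen I d c i = (if i \<in> I then ggen i else gadd (ggen i) (gscale c (d i)))"

definition gshift :: "nat set \<Rightarrow> (nat \<Rightarrow> 'a::field grass) \<Rightarrow> 'a \<Rightarrow> 'a grass \<Rightarrow> 'a grass" where
  "gshift I d c = gsubst (shift_gen I d c)"

context
  fixes I :: "nat set" and d :: "nat \<Rightarrow> 'a::field_char_0 grass"
  assumes d: "\<And>j. j \<notin> I \<Longrightarrow> d j \<in> gE \<and> godd (d j)"
begin

lemma shift_gen_gE: "shift_gen I d c i \<in> gE"
  using d by (simp add: shift_gen_def ggen_gE gadd_gE gscale_gE)

lemma galg_hom_gshift: "galg_hom (gshift I d c)"
  unfolding gshift_def
  by (rule galg_hom_gsubst[OF shift_gen_gE]) (simp add: shift_gen_def godd_ggen godd_gadd godd_gscale d)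

lemma gshift_gone: "gshift I d c gone = gone"
  by (simp add: gshift_def gsubst_gone)

lemma gshift_ggen: "gshift I d c (ggen i) = shift_gen I d c i"
  by (simp add: gshift_def gsubst_ggen shift_gen_gE)

lemma gshift_fix:
  assumes x: "x \<in> gE" and "\<And>S. x S \<noteq> 0 \<Longrightarrow> S \<subseteq> I"
  shows "gshift I d c x = x"
proof -
  have "gprod_set (shift_gen I d c) S = gprod_set ggen S" if "S \<in> gsupp x" for S
    using that assms(2) by (intro gprod_set_cong) (auto simp: gsupp_def shift_gen_def)
  then have "gshift I d c x = gsubst ggen x"
    unfolding gshift_def gsubst_def glc_def by (intro ext sum.cong) auto
  also have "\<dots> = x" using galg_hom_eq_gsubst[OF galg_hom_id _ x] by simp
  finally show ?thesis .
qed

lemma bij_betw_gshift: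
  assumes d_supp: "\<And>j S. j \<notin> I \<Longrightarrow> d j S \<noteq> 0 \<Longrightarrow> S \<subseteq> I"
  shows "bij_betw (gshift I d c) gE gE"
proof -
  have inv: "gshift I d c' (shift_gen I d (- c') i) = ggen i" for c' i
  proof (cases "i \<in> I")
    case False
    have "gshift I d c' (shift_gen I d (- c') i) = gadd (shift_gen I d c' i) (gscale (- c') (d i))"
      using False d gshift_fix[OF _ d_supp]
      by (simp add: shift_gen_def galg_hom_gadd[OF galg_hom_gshift] galg_hom_gscale[OF galg_hom_gshift]
          ggen_gE gscale_gE gshift_ggen)
    then show ?thesis
      using False by (simp add: shift_gen_def gadd_def gscale_def fun_eq_iff)
  qed (simp add: shift_gen_def gshift_ggen)
  show ?thesis
    using inv[of c] inv[of "- c"]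
    by (intro galg_hom_bij_betwI[where h = "gshift I d (- c)"])
       (simp_all add: galg_hom_gshift gshift_gone gshift_ggen)
qed

end

lemma gshift_conj:
  fixes d :: "nat \<Rightarrow> 'a::field_char_0 grass"
  assumes d: "\<And>j. j \<notin> I \<Longrightarrow> d j \<in> gE \<and> godd (d j)"
    and d_supp: "\<And>j S. j \<notin> I \<Longrightarrow> d j S \<noteq> 0 \<Longrightarrow> S \<subseteq> I \<and> even (card (S \<inter> Im))"
    and "Im \<subseteq> I" and \<phi>: "galg_hom \<phi>" "\<phi> gone = gone"
    and \<phi>_even: "\<And>i. i \<in> I - Im \<Longrightarrow> \<phi> (ggen i) = ggen i"
    and \<phi>_odd: "\<And>i. i \<in> Im \<Longrightarrow> \<phi> (ggen i) = gscale (-1) (ggen i)"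
    and \<phi>_shift: "\<And>j. j \<notin> I \<Longrightarrow> \<phi> (ggen j) = gadd (gscale (-1) (ggen j)) (gscale 2 (d j))"
    and x: "x \<in> gE"
  shows "gshift I d 1 (\<phi> x) = hgrading_aut (Im \<union> - I) (gshift I d 1 x)"
proof (rule galg_hom_eqI[OF _ _ _ _ _ x])
  let ?\<psi> = "gshift I d 1" and ?\<theta> = "hgrading_aut (Im \<union> - I) :: 'a grass \<Rightarrow> _"
  have \<psi>: "galg_hom ?\<psi>" using d by (rule galg_hom_gshift)
  show "galg_hom (\<lambda>x. ?\<psi> (\<phi> x))" by (rule galg_hom_comp[OF \<psi> \<phi>(1)])
  show "galg_hom (\<lambda>x. ?\<theta> (?\<psi> x))" by (rule galg_hom_comp[OF galg_hom_hgrading_aut \<psi>])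
  show "?\<psi> (\<phi> gone) = gone" "?\<theta> (?\<psi> gone) = gone"
    using d by (simp_all add: \<phi> gshift_gone[OF d] hgrading_aut_gone)
  fix i
  show "?\<psi> (\<phi> (ggen i)) = ?\<theta> (?\<psi> (ggen i))"
  proof (cases "i \<in> I")
    case True
    then show ?thesis
      using \<phi>_even[of i] \<phi>_odd[of i] \<open>Im \<subseteq> I\<close> d
      by (cases "i \<in> Im")
         (simp_all add: gshift_ggen[OF d] shift_gen_def hgrading_aut_ggen hgrading_gen_def
           galg_hom_gscale[OF \<psi> ggen_gE])
  next
    case False
    have "?\<psi> (d i) = d i"
      using d d_supp False by (intro gshift_fix) auto
    moreover have "?\<theta> (d i) = d i"
    proof -
      have "d i S \<noteq> 0 \<Longrightarrow> S \<inter> (Im \<union> - I) = S \<inter> Im" for S using d_supp[OF False] by auto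
      then have "d i \<in> hcomp0 (Im \<union> - I)"
        using d d_supp False by (auto simp: hcomp0_def)
      then show ?thesis by (simp add: Ephi0_hgrading_aut[symmetric] Ephi0_def)
    qed
    ultimately have \<psi>\<phi>: "?\<psi> (\<phi> (ggen i)) = gadd (gscale (-1) (shift_gen I d 1 i)) (gscale 2 (d i))"
      and \<theta>\<psi>: "?\<theta> (?\<psi> (ggen i)) = gadd (gscale (-1) (ggen i)) (d i)"
      using False d[OF False] \<phi>_shift[OF False]
      by (simp_all add: gshift_ggen[OF d] shift_gen_def hgrading_aut_ggen hgrading_gen_def ggen_gE
          gscale_gE galg_hom_gadd[OF \<psi>] galg_hom_gscale[OF \<psi>] galg_hom_gadd[OF galg_hom_hgrading_aut]
          galg_hom_gscale[OF galg_hom_hgrading_aut])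
    show ?thesis
      unfolding \<psi>\<phi> \<theta>\<psi> using False by (simp add: shift_gen_def gadd_def gscale_def fun_eq_iff)
  qed
qed

theorem mainTheorem6:
  fixes I Ip Im :: "nat set"
    and d :: "nat \<Rightarrow> 'a::field_char_0 grass"
    and \<phi> :: "'a grass \<Rightarrow> 'a grass"
  assumes "infinite I" and "I \<noteq> UNIV"
    and "Ip \<inter> Im = {}" and "Ip \<union> Im = I"
    and "\<forall>j. j \<notin> I \<longrightarrow> d j \<in> gE \<and>
           (\<forall>S. d j S \<noteq> 0 \<longrightarrow> odd (card S) \<and> S \<subseteq> I \<and> even (card (S \<inter> Im)))"
    and "galg_hom \<phi>" and "bij_betw \<phi> gE gE" and "\<forall>x\<in>gE. \<phi> (\<phi> x) = x"
    and "\<forall>i\<in>Ip. \<phi> (ggen i) = ggen i"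
    and "\<forall>i\<in>Im. \<phi> (ggen i) = gscale (-1) (ggen i)"
    and "\<forall>j. j \<notin> I \<longrightarrow> \<phi> (ggen j) = gadd (gscale (-1) (ggen j)) (gscale 2 (d j))"
  shows "z2_iso (Ephi0 \<phi>) (Ephi1 \<phi>) (hcomp0 Einf_deg1) (hcomp1 Einf_deg1)
      \<or> (\<exists>k. z2_iso (Ephi0 \<phi>) (Ephi1 \<phi>) (hcomp0 (Ekstar_deg1 k)) (hcomp1 (Ekstar_deg1 k)))
      \<or> (\<exists>k. z2_iso (Ephi0 \<phi>) (Ephi1 \<phi>) (hcomp0 (Ek_deg1 k)) (hcomp1 (Ek_deg1 k)))"
proof -
  let ?D = "Im \<union> - I"
  have d: "\<And>j. j \<notin> I \<Longrightarrow> d j \<in> gE \<and> godd (d j)"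
    and d_supp: "\<And>j S. j \<notin> I \<Longrightarrow> d j S \<noteq> 0 \<Longrightarrow> S \<subseteq> I \<and> even (card (S \<inter> Im))"
    using assms(5) by (auto simp: godd_def)
  have "\<phi> gone = gone"
    using assms(6,7) gone_gE by (auto simp: bij_betw_def intro: galg_hom_gone)
  then have "gshift I d 1 (\<phi> x) = hgrading_aut ?D (gshift I d 1 x)" if "x \<in> gE" for x
    using assms(3,4,6,9-11) by (intro gshift_conj[OF d d_supp _ _ _ _ _ _ that]) auto
  moreover have "bij_betw (gshift I d 1) gE gE"
  proof (rule bij_betw_gshift[OF d])
    show "S \<subseteq> I" if "j \<notin> I" "d j S \<noteq> 0" for j S using d_supp[OF that] by blast
  qed
  ultimately have "z2_iso (Ephi0 \<phi>) (Ephi1 \<phi>) (Ephi0 (hgrading_aut ?D)) (Ephi1 (hgrading_aut ?D))"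
    using assms(6) by (intro z2_iso_Ephi_conj[OF galg_hom_gshift[OF d]]) (auto simp: galg_hom_gE)
  then have "z2_iso (Ephi0 \<phi>) (Ephi1 \<phi>) (hcomp0 (p ` ?D)) (hcomp1 (p ` ?D))" if "bij p" for p
    using z2_iso_trans z2_iso_hcomp_bij_image[OF that]
    by (metis Ephi0_hgrading_aut Ephi1_hgrading_aut)
  then show ?thesis using bij_image_normal_form[of ?D] by metis
qed

end
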